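(* Let $m\geq 2$, $\lambda\in\{1,\dots,m\}$, let $\rho:[0,1]\to[0,1]$ be continuous and nondecreasing, and let the threshold collection be $t_k=\rho(k/m)$, $1\le k\le m$ (with $t_0=0$). For any realization $p_1,\dots,p_m\in[0,1]$ of the $p$-values, let $\hat k$ be the step-up-down index of order $\lambda$ defined below, and let $\hat{\mathbb{G}}_m(x)=m^{-1}\sum_{i=1}^m \mathbf{1}\{p_i\le x\}$ be the empirical c.d.f. of the $p$-values. Then $$\mathcal{U}(\lambda/m,\hat{\mathbb{G}}_m)\;\le\; \hat k/m\;\le\;\mathcal{U}\big(\lambda/m,(\hat{\mathbb{G}}_m+m^{-1})\wedge 1\big).$$
   Context: Step-up-down index: order the $p$-values $p_{(1)}\le\dots\le p_{(m)}$ with $p_{(0)}=0$, $t_0=0$. Then $\hat k=\max\{k\in\{\lambda,\dots,m\}: \forall k'\in\{\lambda,\dots,k\},\ p_{(k')}\le t_{k'}\}$ if $p_{(\lambda)}\le t_\lambda$, and $\hat k=\max\{k\in\{0,\dots,\lambda\}: p_{(k)}\le t_k\}$ if $p_{(\lambda)}>t_\lambda$. The step-up-down procedure $\mathrm{SUD}_\lambda(\mathbf t)$ rejects hypothesis $i$ iff $p_i\le t_{\hat k}$. For a nondecreasing $G:[0,1]\to[0,1]$ and $\tau\in[0,1]$, define $\mathcal{U}(\tau,G)=\min\{u\in[\tau,1]: G(\rho(u))\le u\}$ if $G(\rho(\tau))\ge\tau$, and $\mathcal{U}(\tau,G)=\max\{u\in[0,\tau]: G(\rho(u))\ge u\}$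 if $G(\rho(\tau))<\tau$. *)

theory Defs
  imports Complex_Main
begin

text \<open>p-values are indexed by 1..m. Order statistic p_(k), with p_(0) = 0.\<close>
definition pord :: "(nat \<Rightarrow> real) \<Rightarrow> nat \<Rightarrow> nat \<Rightarrow> real" where
  "pord p m k = (if k = 0 then 0 else sort (map p [1..<m+1]) ! (k - 1))"

definition thr :: "(real \<Rightarrow> real) \<Rightarrow> nat \<Rightarrow> nat \<Rightarrow> real" where
  "thr \<rho> m k = (if k = 0 then 0 else \<rho> (real k / real m))"

definition khat :: "(real \<Rightarrow> real) \<Rightarrow> nat \<Rightarrow> nat \<Rightarrow> (nat \<Rightarrow> real) \<Rightarrow> nat" where
  "khat \<rho> m lam p =
     (if pord p m lam \<le> thr \<rho> m lam
      then Max {k \<in> {lam..m}. \<forall>k'\<in>{lam..k}. pord p m k' \<le> thr \<rho> m k'}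
      else Max {k \<in> {0..lam}. pord p m k \<le> thr \<rho> m k})"

definition ecdf :: "nat \<Rightarrow> (nat \<Rightarrow> real) \<Rightarrow> real \<Rightarrow> real" where
  "ecdf m p x = real (card {i \<in> {1..m}. p i \<le> x}) / real m"

text \<open>The functional U(tau, G); min/max rendered as Inf/Sup (they are attained).\<close>
definition Ufun :: "(real \<Rightarrow> real) \<Rightarrow> real \<Rightarrow> (real \<Rightarrow> real) \<Rightarrow> real" where
  "Ufun \<rho> \<tau> G =
     (if G (\<rho> \<tau>) \<ge> \<tau>
      then Inf {u \<in> {\<tau>..1}. G (\<rho> u) \<le> u}
      else Sup {u \<in> {0..\<tau>}. G (\<rho> u) \<ge> u})"

end

theory Submission
  imports Defs
begin

(* The step-up-down index and the functional U(tau, G) are linked by counting.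
   Write N(u) for the number of p-values below rho(u), so that the empirical
   c.d.f. satisfies ecdf(rho u) = N(u)/m.  The order-statistic duality
   "p_(k) <= x iff at least k p-values are <= x" turns the test p_(k) <= t_k
   into k <= N(k/m), i.e. into the point k/m lying on or below the curve
   u |-> ecdf(rho u).  Since N is integer valued and nondecreasing, a point u
   on one side of the diagonal is transported to the grid point floor(m u) or
   ceiling(m u) at the cost of at most one unit of N, which explains the
   shifted function min (ecdf + 1/m) 1 in the upper bound.

   The theorem is then the case split on the test at lambda. *)

section \<open>Counting p-values\<close>

definition pcount :: "(nat \<Rightarrow> real) \<Rightarrow> nat \<Rightarrow> real \<Rightarrow> nat" where
  "pcount p m x = card {i \<in> {1..m}. p i \<le> x}"

lemma ecdf_eq_pcount: "ecdf m p x = real (pcount p m x) / real m"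
  by (simp add: ecdf_def pcount_def)

lemma pcount_le: "pcount p m x \<le> m"
proof -
  have "pcount p m x \<le> card {1..m}"
    unfolding pcount_def by (intro card_mono) auto
  then show ?thesis by simp
qed

lemma pcount_mono: "x \<le> y \<Longrightarrow> pcount p m x \<le> pcount p m y"
  unfolding pcount_def by (intro card_mono) auto

text \<open>Composed with a nondecreasing threshold function, the count stays
  nondecreasing; this is the only property of \<open>\<rho>\<close> the argument uses.\<close>
lemma mono_on_pcount_comp:
  assumes "mono_on {0..1} \<rho>"
  shows "mono_on {0..1} (\<lambda>u. pcount p m (\<rho> u))"
  using assms by (auto intro!: mono_onI pcount_mono dest: mono_onD)

lemma ecdf_bounds: "0 \<le> ecdf m p x" "ecdf m p x \<le> 1"
  using pcount_le[of p m x] by (auto simp: ecdf_eq_pcount divide_simps)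

lemma pord_le_iff:
  assumes "1 \<le> k" "k \<le> m"
  shows "pord p m k \<le> x \<longleftrightarrow> k \<le> pcount p m x"
proof -
  define xs where "xs = sort (map p [1..<m+1])"
  have len: "length xs = m" and srt: "sorted xs" by (simp_all add: xs_def)
  have pk: "pord p m k = xs ! (k - 1)"
    using assms by (simp add: pord_def xs_def)
  text \<open>Sorting does not change how many entries lie below \<open>x\<close>.\<close>
  have "card {j. j < m \<and> xs ! j \<le> x} = length (filter (\<lambda>y. y \<le> x) xs)"
    by (simp add: length_filter_conv_card len)
  also have "\<dots> = length (filter (\<lambda>i. p i \<le> x) [1..<m+1])"
    unfolding xs_def by (simp add: filter_sort filter_map o_def)
  also have "\<dots> = card {i \<in> {1..m}. p i \<le> x}"
    by (subst distinct_card[symmetric]) (auto intro: arg_cong[where f = card])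
  finally have count: "card {j. j < m \<and> xs ! j \<le> x} = pcount p m x"
    by (simp add: pcount_def)
  show ?thesis
  proof
    assume le: "pord p m k \<le> x"
    have "{0..<k} \<subseteq> {j. j < m \<and> xs ! j \<le> x}"
    proof
      fix j assume "j \<in> {0..<k}"
      then have "xs ! j \<le> xs ! (k - 1)" "j < m"
        using srt len assms by (auto simp: sorted_nth_mono)
      then show "j \<in> {j. j < m \<and> xs ! j \<le> x}" using le pk by auto
    qed
    from card_mono[OF _ this] show "k \<le> pcount p m x" using count by simp
  next
    assume k: "k \<le> pcount p m x"
    show "pord p m k \<le> x"
    proof (rule ccontr)
      assume "\<not> pord p m k \<le> x"
      then have gt: "x < xs ! (k - 1)" using pk by simp
      have "{j. j < m \<and> xs ! j \<le> x} \<subseteq> {0..<k - 1}"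
      proof
        fix j assume j: "j \<in> {j. j < m \<and> xs ! j \<le> x}"
        have "\<not> k - 1 \<le> j"
          using j gt srt len sorted_nth_mono[of xs "k - 1" j] by auto
        then show "j \<in> {0..<k - 1}" by simp
      qed
      from card_mono[OF _ this] show False using k count assms by simp
    qed
  qed
qed

section \<open>Crossing the grid \<open>{0, 1/m, ..., 1}\<close>\<close>

text \<open>If the grid point below \<open>u\<close> satisfies \<open>j \<le> N(j/m)\<close>, then \<open>u\<close> lies below
  the curve \<open>(N + 1)/m\<close>: a nondecreasing integer-valued \<open>N\<close> can lose at most
  one unit between \<open>u\<close> and the grid point \<open>\<lfloor>m u\<rfloor>/m\<close>.\<close>
lemma floor_crossing:
  fixes N :: "real \<Rightarrow> nat" and m :: nat and u :: real
  defines "j \<equiv> nat \<lfloor>real m * u\<rfloor>"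
  assumes mono: "mono_on {0..1} N" and m: "0 < m" and u: "0 \<le> u" "u \<le> 1"
    and above: "j \<le> N (real j / real m)"
  shows "real m * u < real (N u) + 1"
proof -
  have j: "real j \<le> real m * u" "real m * u < real j + 1"
    using m u unfolding j_def by (auto simp: of_nat_nat)
  then have "real j / real m \<le> u" "0 \<le> real j / real m"
    using m by (auto simp: divide_simps mult.commute)
  then have "N (real j / real m) \<le> N u"
    using u by (intro mono_onD[OF mono]) auto
  then show ?thesis using j above by linarith
qed

lemma ceiling_crossing:
  fixes N :: "real \<Rightarrow> nat" and m :: nat and u :: real
  defines "j \<equiv> nat \<lceil>real m * u\<rceil>"
  assumes mono: "mono_on {0..1} N" and m: "0 < m" and u: "0 \<le> u" "u \<le> 1"
    and below: "real m * u \<le> real (N u)"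
  shows "j \<le> N (real j / real m)"
proof -
  have j: "real m * u \<le> real j" "real j < real m * u + 1"
    using m u unfolding j_def by (auto simp: of_nat_nat) linarith
  have "real m * u \<le> real m" using m u by simp
  then have "j \<le> m" unfolding j_def by (simp add: nat_le_iff ceiling_le_iff)
  with j have "u \<le> real j / real m" "real j / real m \<le> 1"
    using m by (auto simp: divide_simps mult.commute)
  then have "N u \<le> N (real j / real m)"
    using u by (intro mono_onD[OF mono]) auto
  then have "real j < real (N (real j / real m)) + 1" using j below by linarith
  then show ?thesis by linarith
qed

section \<open>Bounds on \<open>U(\<tau>, G)\<close>\<close>

lemma Ufun_le:
  fixes G \<rho> :: "real \<Rightarrow> real"
  assumes "0 \<le> \<tau>" "0 \<le> G (\<rho> 0)"
    and down: "\<tau> \<le> G (\<rho> \<tau>) \<Longrightarrow> x \<in> {\<tau>..1} \<and> G (\<rho> x) \<le> x"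
    and up: "G (\<rho> \<tau>) < \<tau> \<Longrightarrow> \<forall>u\<in>{0..\<tau>}. u \<le> G (\<rho> u) \<longrightarrow> u \<le> x"
  shows "Ufun \<rho> \<tau> G \<le> x"
proof (cases "\<tau> \<le> G (\<rho> \<tau>)")
  case True
  then show ?thesis
    using down unfolding Ufun_def by (auto intro!: cInf_lower bdd_belowI[of _ \<tau>])
next
  case False
  have "0 \<in> {u \<in> {0..\<tau>}. u \<le> G (\<rho> u)}" using assms(1,2) by auto
  then show ?thesis
    using False up unfolding Ufun_def by (auto intro!: cSup_least)
qed

lemma Ufun_ge:
  fixes G \<rho> :: "real \<Rightarrow> real"
  assumes "\<tau> \<le> 1" "G (\<rho> 1) \<le> 1"
    and down: "\<tau> \<le> G (\<rho> \<tau>) \<Longrightarrow> \<forall>u\<in>{\<tau>..1}. u < x \<longrightarrow> u < G (\<rho> u)"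
    and up: "G (\<rho> \<tau>) < \<tau> \<Longrightarrow> x \<in> {0..\<tau>} \<and> x \<le> G (\<rho> x)"
  shows "x \<le> Ufun \<rho> \<tau> G"
proof (cases "\<tau> \<le> G (\<rho> \<tau>)")
  case True
  have "1 \<in> {u \<in> {\<tau>..1}. G (\<rho> u) \<le> u}" using assms(1,2) by auto
  then show ?thesis
    using True down unfolding Ufun_def by (auto intro!: cInf_greatest simp: not_less)
next
  case False
  then show ?thesis
    using up unfolding Ufun_def by (auto intro!: cSup_upper bdd_aboveI[of _ \<tau>])
qed

section \<open>Structure of the step-up-down index\<close>

definition hits :: "(real \<Rightarrow> real) \<Rightarrow> nat \<Rightarrow> (nat \<Rightarrow> real) \<Rightarrow> nat \<Rightarrow> bool" where
  "hits \<rho> m p k \<longleftrightarrow> pord p m k \<le> thr \<rho> m k"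

lemma khat_hits:
  "khat \<rho> m lam p =
     (if hits \<rho> m p lam then Max {k \<in> {lam..m}. \<forall>k'\<in>{lam..k}. hits \<rho> m p k'}
      else Max {k \<in> {0..lam}. hits \<rho> m p k})"
  by (simp add: khat_def hits_def)

text \<open>By the duality, the test at step \<open>k\<close> says that \<open>k/m\<close> lies below the
  curve \<open>u \<mapsto> N(u)/m\<close>; for \<open>k = 0\<close> both sides hold trivially.\<close>
lemma hits_iff_pcount:
  assumes "k \<le> m"
  shows "hits \<rho> m p k \<longleftrightarrow> k \<le> pcount p m (\<rho> (real k / real m))"
  using assms pord_le_iff[of k m p] by (cases "k = 0") (auto simp: hits_def pord_def thr_def)

lemma khat_step_down:
  assumes "hits \<rho> m p lam" "lam \<le> m"
  defines "K \<equiv> khat \<rho> m lam p"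
  shows "lam \<le> K" "K \<le> m" "\<forall>k\<in>{lam..K}. hits \<rho> m p k"
    and "K < m \<Longrightarrow> \<not> hits \<rho> m p (K + 1)"
proof -
  define S where "S = {k \<in> {lam..m}. \<forall>k'\<in>{lam..k}. hits \<rho> m p k'}"
  have K: "K = Max S" using assms(1) by (simp add: K_def khat_hits S_def)
  have "finite S" "lam \<in> S" using assms(1,2) by (auto simp: S_def)
  then have "K \<in> S" and maximal: "\<And>k. k \<in> S \<Longrightarrow> k \<le> K"
    unfolding K by (auto intro: Max_in)
  then show "lam \<le> K" "K \<le> m" "\<forall>k\<in>{lam..K}. hits \<rho> m p k" by (auto simp: S_def)
  show "\<not> hits \<rho> m p (K + 1)" if "K < m"
  proof
    assume "hits \<rho> m p (K + 1)"
    with \<open>K \<in> S\<close> that have "K + 1 \<in> S" by (auto simp: S_def le_Suc_eq)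
    then show False using maximal by fastforce
  qed
qed

text \<open>Step-up regime: after a failed test at \<open>\<lambda>\<close>, the index is the last
  success at or below \<open>\<lambda>\<close> (step \<open>0\<close> always succeeds).\<close>
lemma khat_step_up:
  assumes "\<not> hits \<rho> m p lam"
  defines "K \<equiv> khat \<rho> m lam p"
  shows "K \<le> lam" "hits \<rho> m p K" "\<And>k. K < k \<Longrightarrow> k \<le> lam \<Longrightarrow> \<not> hits \<rho> m p k"
proof -
  define S where "S = {k \<in> {0..lam}. hits \<rho> m p k}"
  have K: "K = Max S" using assms by (simp add: K_def khat_hits S_def)
  have "finite S" "0 \<in> S" by (auto simp: S_def hits_def pord_def thr_def)
  then have "K \<in> S" and maximal: "\<And>k. k \<in> S \<Longrightarrow> k \<le> K"
    unfolding K by (auto intro: Max_in)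
  then show "K \<le> lam" "hits \<rho> m p K" by (auto simp: S_def)
  show "\<not> hits \<rho> m p k" if "K < k" "k \<le> lam" for k
    using that maximal[of k] by (auto simp: S_def)
qed

section \<open>The index against the empirical c.d.f.\<close>

lemma step_down_bounds:
  assumes "0 < m" "lam \<le> m" "mono_on {0..1} \<rho>" "hits \<rho> m p lam"
  defines "K \<equiv> khat \<rho> m lam p"
  shows "ecdf m p (\<rho> (real K / real m)) \<le> real K / real m"
    and "\<forall>u\<in>{real lam / real m..1}. u < real K / real m
           \<longrightarrow> u < min (ecdf m p (\<rho> u) + 1 / real m) 1"
proof -
  define N where "N u = pcount p m (\<rho> u)" for u
  have mono: "mono_on {0..1} N"
    unfolding N_def using assms(3) by (rule mono_on_pcount_comp)
  note K = khat_step_down[OF assms(4,2), folded K_def]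
  have mpos: "0 < real m" using assms(1) by simp
  show "ecdf m p (\<rho> (real K / real m)) \<le> real K / real m"
  proof (cases "K = m")
    case True
    then show ?thesis using ecdf_bounds mpos by simp
  next
    case False
    then have "N (real (K + 1) / real m) \<le> K"
      using K hits_iff_pcount[of "K + 1" m] by (simp add: N_def)
    moreover have "N (real K / real m) \<le> N (real (K + 1) / real m)"
      using False K(2) mpos by (intro mono_onD[OF mono]) (auto simp: divide_simps)
    ultimately show ?thesis
      using mpos by (simp add: ecdf_eq_pcount N_def divide_simps)
  qed
  show "\<forall>u\<in>{real lam / real m..1}. u < real K / real m
          \<longrightarrow> u < min (ecdf m p (\<rho> u) + 1 / real m) 1"
  proof (intro ballI impI)
    fix u assume u: "u \<in> {real lam / real m..1}" and uK: "u < real K / real m"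
    define j where "j = nat \<lfloor>real m * u\<rfloor>"
    have mu: "real lam \<le> real m * u" "real m * u < real K"
      using u uK mpos by (auto simp: divide_simps mult.commute)
    then have "lam \<le> j" "j < K" unfolding j_def by linarith+
    then have "hits \<rho> m p j" using K(3) by simp
    then have "j \<le> N (real j / real m)"
      using hits_iff_pcount[of j m] \<open>j < K\<close> K(2) by (simp add: N_def)
    moreover have "0 \<le> u" "u \<le> 1"
      using u order_trans[of 0 "real lam / real m" u] by auto
    ultimately have "real m * u < real (N u) + 1"
      using floor_crossing[OF mono assms(1), of u] unfolding j_def by blast
    moreover have "real m * u < real m * 1" using mu(2) K(2) by simp
    then have "u < 1" using mpos by simp
    ultimately show "u < min (ecdf m p (\<rho> u) + 1 / real m) 1"
      using mpos by (simp add: ecdf_eq_pcount N_def divide_simps mult.commute)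
  qed
qed

lemma step_up_bounds:
  assumes "0 < m" "lam \<le> m" "mono_on {0..1} \<rho>" "\<not> hits \<rho> m p lam"
  defines "K \<equiv> khat \<rho> m lam p"
  shows "\<forall>u\<in>{0..real lam / real m}. u \<le> ecdf m p (\<rho> u) \<longrightarrow> u \<le> real K / real m"
    and "real K / real m \<le> ecdf m p (\<rho> (real K / real m))"
proof -
  define N where "N u = pcount p m (\<rho> u)" for u
  have mono: "mono_on {0..1} N"
    unfolding N_def using assms(3) by (rule mono_on_pcount_comp)
  note K = khat_step_up[OF assms(4), folded K_def]
  have mpos: "0 < real m" using assms(1) by simp
  show "\<forall>u\<in>{0..real lam / real m}. u \<le> ecdf m p (\<rho> u) \<longrightarrow> u \<le> real K / real m"
  proof (intro ballI impI)
    fix u assume u: "u \<in> {0..real lam / real m}" and below: "u \<le> ecdf m p (\<rho> u)"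
    define j where "j = nat \<lceil>real m * u\<rceil>"
    have ul: "real m * u \<le> real lam" using u mpos by (auto simp: divide_simps mult.commute)
    then have "real m * u \<le> real m" using assms(2) by linarith
    then have "u \<le> 1" using mpos by simp
    moreover have "real m * u \<le> real (N u)"
      using below mpos by (simp add: ecdf_eq_pcount N_def divide_simps mult.commute)
    ultimately have "j \<le> N (real j / real m)"
      using ceiling_crossing[OF mono assms(1)] u unfolding j_def by auto
    moreover have "j \<le> lam" using ul unfolding j_def by linarith
    ultimately have "hits \<rho> m p j"
      using hits_iff_pcount[of j m] assms(2) by (simp add: N_def)
    then have "j \<le> K" using K(3) \<open>j \<le> lam\<close> by (meson not_le)
    then have "real m * u \<le> real K" unfolding j_def by linarith
    then show "u \<le> real K / real m" using mpos by (simp add: divide_simps mult.commute)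
  qed
  show "real K / real m \<le> ecdf m p (\<rho> (real K / real m))"
    using K hits_iff_pcount[of K m] assms(2) mpos
    by (simp add: ecdf_eq_pcount divide_simps)
qed

lemma Ufun_bounds_step_down:
  assumes "0 < m" "lam \<le> m" "mono_on {0..1} \<rho>" "hits \<rho> m p lam"
  defines "\<tau> \<equiv> real lam / real m" and "K \<equiv> khat \<rho> m lam p"
    and "H \<equiv> \<lambda>x. min (ecdf m p x + 1 / real m) 1"
  shows "Ufun \<rho> \<tau> (ecdf m p) \<le> real K / real m \<and> real K / real m \<le> Ufun \<rho> \<tau> H"
proof -
  note bounds = step_down_bounds[OF assms(1-4), folded K_def \<tau>_def H_def]
  have m: "0 < real m" "0 < 1 / real m" using assms(1) by simp_all
  have G_\<tau>: "\<tau> \<le> ecdf m p (\<rho> \<tau>)"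
    using assms(2,4) hits_iff_pcount[of lam m] m by (simp add: \<tau>_def ecdf_eq_pcount divide_simps)
  have \<tau>: "0 \<le> \<tau>" "\<tau> \<le> real K / real m" "real K / real m \<le> 1"
    using khat_step_down[OF assms(4,2), folded K_def] m by (auto simp: \<tau>_def divide_simps)
  have "\<tau> \<le> ecdf m p (\<rho> \<tau>) + 1 / real m" using G_\<tau> m(2) by linarith
  then have "\<tau> \<le> H (\<rho> \<tau>)" using \<tau> by (simp add: H_def)
  then show ?thesis
    using bounds G_\<tau> \<tau> by (intro conjI Ufun_le Ufun_ge) (auto simp: ecdf_bounds H_def)
qed

lemma Ufun_bounds_step_up:
  assumes "0 < m" "lam \<le> m" "mono_on {0..1} \<rho>" "\<not> hits \<rho> m p lam"
  defines "\<tau> \<equiv> real lam / real m" and "K \<equiv> khat \<rho> m lam p"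
    and "H \<equiv> \<lambda>x. min (ecdf m p x + 1 / real m) 1"
  shows "Ufun \<rho> \<tau> (ecdf m p) \<le> real K / real m \<and> real K / real m \<le> Ufun \<rho> \<tau> H"
proof -
  note bounds = step_up_bounds[OF assms(1-4), folded K_def \<tau>_def]
  have m: "0 < real m" "0 < 1 / real m" using assms(1) by simp_all
  have G_\<tau>: "ecdf m p (\<rho> \<tau>) < \<tau>"
    using assms(2,4) hits_iff_pcount[of lam m] m by (simp add: \<tau>_def ecdf_eq_pcount divide_simps)
  have \<tau>: "0 \<le> real K / real m" "real K / real m \<le> \<tau>" "0 \<le> \<tau>" "\<tau> \<le> 1"
    using khat_step_up[OF assms(4), folded K_def] assms(2) m by (auto simp: \<tau>_def divide_simps)
  have "real K / real m \<le> ecdf m p (\<rho> (real K / real m)) + 1 / real m"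
    using bounds(2) m(2) by linarith
  then have "real K / real m \<le> H (\<rho> (real K / real m))" using \<tau> by (simp add: H_def)
  then show ?thesis
    using bounds G_\<tau> \<tau> by (intro conjI Ufun_le Ufun_ge) (auto simp: ecdf_bounds H_def)
qed

text \<open>The continuity of \<open>\<rho>\<close>, its range, the range of the p-values and
  \<open>\<lambda> \<ge> 1\<close> are not needed: monotonicity of \<open>\<rho>\<close> and \<open>\<lambda> \<le> m\<close> suffice.\<close>
theorem lemma4p1:
  fixes m lam :: nat and \<rho> :: "real \<Rightarrow> real" and p :: "nat \<Rightarrow> real"
  assumes "m \<ge> 2"
    and "1 \<le> lam" and "lam \<le> m"
    and "continuous_on {0..1} \<rho>"
    and "mono_on {0..1} \<rho>"
    and "\<rho> ` {0..1} \<subseteq> {0..1}"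
    and "\<forall>i\<in>{1..m}. 0 \<le> p i \<and> p i \<le> 1"
  shows "Ufun \<rho> (real lam / real m) (ecdf m p) \<le> real (khat \<rho> m lam p) / real m
       \<and> real (khat \<rho> m lam p) / real m
           \<le> Ufun \<rho> (real lam / real m) (\<lambda>x. min (ecdf m p x + 1 / real m) 1)"
proof -
  have "0 < m" using assms(1) by simp
  then show ?thesis
    using Ufun_bounds_step_down[OF _ assms(3,5)] Ufun_bounds_step_up[OF _ assms(3,5)]
    by (cases "hits \<rho> m p lam") blast+
qed

end
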